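(* Let $G$ be a simple connected graph on $n$ vertices with clique number $\omega$, $2\le\omega\le n-1$, and Wiener index $W$. Let $G_1,\dots,G_k$ be all the cliques of order $\omega$, $s_i=\sum_{v_j\in V(G_i)}D_j$, $a_i=n\omega(1-\omega)+4\omega(s_i-W)-ns_i$ and $b_i=4W\omega(\omega-1)+4s_i(W-s_i)$ for $1\le i\le k$. Then (i) $\displaystyle q^{\mathcal{D}}(G)\ge \max_{1\le i\le k}\frac{-a_i+\sqrt{a_i^{2}-4b_i(n-\omega)\omega}}{2(n-\omega)\omega}$; (ii) $\displaystyle q^{\mathcal{D}}_{min}(G)\le \min_{1\le i\le k}\frac{-a_i-\sqrt{a_i^{2}-4b_i(n-\omega)\omega}}{2(n-\omega)\omega}$.
   Context: $G$ has vertex set $\{v_1,\dots,v_n\}$; $d_G$ is the graph distance; $\mathcal{D}(G)=(d_G(v_i,v_j))$. $D_j=\sum_{l\ne j}d_G(v_j,v_l)$, $Tr(G)=\mathrm{diag}(D_1,\dots,D_n)$, $\mathcal{Q}(G)=Tr(G)+\mathcal{D}(G)$. $W=\sum_{i<j}d_G(v_i,v_j)$. The clique number is the largest order of a complete subgraph. $q^{\mathcal{D}}(G)$, $q^{\mathcal{D}}_{min}(G)$ are the largest and least eigenvalues of $\mathcal{Q}(G)$. *)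

theory Defs
  imports "HOL-Analysis.Analysis"
begin

definition simple_graph :: "('a \<Rightarrow> 'a \<Rightarrow> bool) \<Rightarrow> bool" where
  "simple_graph E \<longleftrightarrow> (\<forall>u v. E u v \<longrightarrow> E v u) \<and> (\<forall>u. \<not> E u u)"

definition is_walk :: "('a \<Rightarrow> 'a \<Rightarrow> bool) \<Rightarrow> 'a list \<Rightarrow> bool" where
  "is_walk E p \<longleftrightarrow> p \<noteq> [] \<and> (\<forall>i. Suc i < length p \<longrightarrow> E (p ! i) (p ! Suc i))"

definition graph_connected :: "('a \<Rightarrow> 'a \<Rightarrow> bool) \<Rightarrow> bool" where
  "graph_connected E \<longleftrightarrow> (\<forall>u v. \<exists>p. is_walk E p \<and> hd p = u \<and> last p = v)"

definition gdist :: "('a \<Rightarrow> 'a \<Rightarrow> bool) \<Rightarrow> 'a \<Rightarrow> 'a \<Rightarrow> nat" where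
  "gdist E u v = (LEAST k. \<exists>p. is_walk E p \<and> hd p = u \<and> last p = v \<and> length p = Suc k)"

definition transmission :: "('a::finite \<Rightarrow> 'a \<Rightarrow> bool) \<Rightarrow> 'a \<Rightarrow> real" where
  "transmission E u = (\<Sum>w\<in>UNIV - {u}. real (gdist E u w))"

text \<open>Wiener index W = sum over unordered pairs {u,v}, u \<noteq> v, of d(u,v);
written as half the sum over ordered pairs (d is symmetric).\<close>
definition wiener :: "('a::finite \<Rightarrow> 'a \<Rightarrow> bool) \<Rightarrow> real" where
  "wiener E = (\<Sum>u\<in>UNIV. \<Sum>v\<in>UNIV - {u}. real (gdist E u v)) / 2"

definition dist_matrix :: "('a::finite \<Rightarrow> 'a \<Rightarrow> bool) \<Rightarrow> real^'a^'a" where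
  "dist_matrix E = (\<chi> i j. real (gdist E i j))"

definition transmission_matrix :: "('a::finite \<Rightarrow> 'a \<Rightarrow> bool) \<Rightarrow> real^'a^'a" where
  "transmission_matrix E = (\<chi> i j. if i = j then transmission E i else 0)"

definition dist_signless_laplacian :: "('a::finite \<Rightarrow> 'a \<Rightarrow> bool) \<Rightarrow> real^'a^'a" where
  "dist_signless_laplacian E = transmission_matrix E + dist_matrix E"

definition is_eigenvalue :: "real^'n^'n \<Rightarrow> real \<Rightarrow> bool" where
  "is_eigenvalue A l \<longleftrightarrow> (\<exists>v. v \<noteq> 0 \<and> A *v v = l *\<^sub>R v)"

text \<open>For a real symmetric matrix all eigenvalues are real, so these are the
largest and least eigenvalues.\<close>
definition largest_eigenvalue :: "real^'n^'n \<Rightarrow> real" where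
  "largest_eigenvalue A = Max {l. is_eigenvalue A l}"

definition least_eigenvalue :: "real^'n^'n \<Rightarrow> real" where
  "least_eigenvalue A = Min {l. is_eigenvalue A l}"

definition is_clique :: "('a \<Rightarrow> 'a \<Rightarrow> bool) \<Rightarrow> 'a set \<Rightarrow> bool" where
  "is_clique E K \<longleftrightarrow> (\<forall>u\<in>K. \<forall>v\<in>K. u \<noteq> v \<longrightarrow> E u v)"

definition clique_number :: "('a::finite \<Rightarrow> 'a \<Rightarrow> bool) \<Rightarrow> nat" where
  "clique_number E = Max (card ` {K. is_clique E K})"

definition clique_trans_sum :: "('a::finite \<Rightarrow> 'a \<Rightarrow> bool) \<Rightarrow> 'a set \<Rightarrow> real" where
  "clique_trans_sum E K = (\<Sum>v\<in>K. transmission E v)"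

definition coef_a :: "('a::finite \<Rightarrow> 'a \<Rightarrow> bool) \<Rightarrow> 'a set \<Rightarrow> real" where
  "coef_a E K = (let n = real CARD('a); w = real (clique_number E); W = wiener E;
                    s = clique_trans_sum E K
                 in n * w * (1 - w) + 4 * w * (s - W) - n * s)"

definition coef_b :: "('a::finite \<Rightarrow> 'a \<Rightarrow> bool) \<Rightarrow> 'a set \<Rightarrow> real" where
  "coef_b E K = (let w = real (clique_number E); W = wiener E;
                    s = clique_trans_sum E K
                 in 4 * W * w * (w - 1) + 4 * s * (W - s))"

end

theory Submission
  imports Defs "HOL-Library.Quadratic_Discriminant"
begin

(* Fix a maximum clique K, of order w, and test the quadratic form of the symmetric matrix Q
   on vectors x that are constant on K and on its complement. Then x' Q x and x' x are
   governed by the 2x2 matrix of block sums of Q, which a clique makes explicit: entries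
   inside K are 1 off the diagonal and every row of Q sums to 2 D_j, so the blocks are
   s + w(w-1), s - w(w-1) and 4W - 3s + w(w-1). The two roots in the statement are the
   generalized eigenvalues of this matrix relative to diag(w, n - w); each is the Rayleigh
   quotient of some such x, and every Rayleigh quotient lies between the least and the
   largest eigenvalue of Q. *)

lemma symmetric_matrix_iff: "transpose A = A \<longleftrightarrow> (\<forall>i j. A $ i $ j = A $ j $ i)"
  by (auto simp: vec_eq_iff transpose_def)

lemma symmetric_matrix_inner_commute:
  fixes A :: "real^'n^'n"
  assumes "transpose A = A"
  shows "x \<bullet> (A *v y) = y \<bullet> (A *v x)"
  by (metis assms dot_lmul_matrix inner_commute transpose_matrix_vector)

lemma quadratic_form_scaleR:
  fixes A :: "real^'n^'n"
  shows "(c *\<^sub>R x) \<bullet> (A *v (c *\<^sub>R x)) = c\<^sup>2 * (x \<bullet> (A *v x))"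
  by (simp add: matrix_vector_mult_scaleR power2_eq_square)

lemma psd_quadratic_form_eq_0_imp_kernel:
  fixes A :: "real^'n^'n"
  assumes sym: "transpose A = A" and psd: "\<And>y. 0 \<le> y \<bullet> (A *v y)" and "x \<bullet> (A *v x) = 0"
  shows "A *v x = 0"
proof (rule ccontr)
  define y where "y = A *v x"
  define K where "K = y \<bullet> y"
  define G where "G = y \<bullet> (A *v y)"
  assume "A *v x \<noteq> 0"
  then have "K > 0" by (simp add: K_def y_def)
  have "G \<ge> 0" using psd by (simp add: G_def)
  have expand: "(x + t *\<^sub>R y) \<bullet> (A *v (x + t *\<^sub>R y)) = t * (2 * K + t * G)" for t
    using symmetric_matrix_inner_commute[OF sym, of x y] \<open>x \<bullet> (A *v x) = 0\<close>
    by (simp add: K_def G_def y_def algebra_simps)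
  define t where "t = - K / (G + 1)"
  have "t < 0" using \<open>K > 0\<close> \<open>G \<ge> 0\<close> by (simp add: t_def)
  moreover have "- t * G \<le> K" using \<open>K > 0\<close> \<open>G \<ge> 0\<close> by (simp add: t_def field_simps)
  then have "2 * K + t * G > 0" using \<open>K > 0\<close> by linarith
  ultimately have "t * (2 * K + t * G) < 0" by (rule mult_neg_pos)
  with psd[of "x + t *\<^sub>R y"] show False by (simp add: expand)
qed

lemma finite_eigenvalues_symmetric:
  fixes A :: "real^'n^'n"
  assumes sym: "transpose A = A"
  shows "finite {l. is_eigenvalue A l}"
proof -
  define S where "S = {l. is_eigenvalue A l}"
  define v where "v l = (SOME v. v \<noteq> 0 \<and> A *v v = l *\<^sub>R v)" for l
  have v: "v l \<noteq> 0" "A *v v l = l *\<^sub>R v l" if "l \<in> S" for l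
    using someI_ex[of "\<lambda>v. v \<noteq> 0 \<and> A *v v = l *\<^sub>R v"] that
    by (auto simp: S_def is_eigenvalue_def v_def)
  have inj: "inj_on v S"
  proof (rule inj_onI)
    fix l m assume "l \<in> S" "m \<in> S" "v l = v m"
    then have "l *\<^sub>R v l = m *\<^sub>R v l" using v by metis
    with v(1)[OF \<open>l \<in> S\<close>] show "l = m" by simp
  qed
  have "pairwise orthogonal (v ` S)"
  proof (rule pairwise_imageI)
    fix l m assume "l \<in> S" "m \<in> S" "v l \<noteq> v m"
    then have "l \<noteq> m" by blast
    have "m * (v l \<bullet> v m) = l * (v l \<bullet> v m)"
      using symmetric_matrix_inner_commute[OF sym, of "v l" "v m"] v \<open>l \<in> S\<close> \<open>m \<in> S\<close>
      by (simp add: inner_commute)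
    with \<open>l \<noteq> m\<close> show "orthogonal (v l) (v m)" by (simp add: orthogonal_def)
  qed
  moreover have "0 \<notin> v ` S" using v by auto
  ultimately have "finite (v ` S)"
    by (intro independent_imp_finite pairwise_orthogonal_independent)
  then show ?thesis using finite_imageD[OF _ inj] by (simp add: S_def)
qed

(* The maximum l of the quadratic form on the unit sphere makes l I - A positive semidefinite,
   with the maximiser in its kernel. *)
lemma symmetric_matrix_max_eigenvalue:
  fixes A :: "real^'n^'n"
  assumes sym: "transpose A = A"
  obtains l where "is_eigenvalue A l" and "\<And>x. x \<bullet> (A *v x) \<le> l * (x \<bullet> x)"
proof -
  define f where "f x = x \<bullet> (A *v x)" for x :: "real^'n"
  have "axis undefined 1 \<in> sphere (0::real^'n) 1" by simp
  then have "sphere (0::real^'n) 1 \<noteq> {}" by blast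
  moreover have "continuous_on (sphere 0 1) f" unfolding f_def by (intro continuous_intros)
  ultimately obtain x0 where x0: "x0 \<in> sphere 0 1" and max: "\<And>u. u \<in> sphere 0 1 \<Longrightarrow> f u \<le> f x0"
    using continuous_attains_sup[OF compact_sphere] by blast
  define l where "l = f x0"
  have bound: "f x \<le> l * (x \<bullet> x)" for x
  proof (cases "x = 0")
    case False
    define u where "u = (1 / norm x) *\<^sub>R x"
    have "x = norm x *\<^sub>R u" using False by (simp add: u_def)
    then have "f x = (norm x)\<^sup>2 * f u" unfolding f_def by (metis quadratic_form_scaleR)
    also have "\<dots> \<le> (norm x)\<^sup>2 * l" using max[of u] False by (simp add: u_def l_def)
    finally show ?thesis by (simp add: power2_norm_eq_inner mult.commute)
  qed (simp add: f_def)
  define B where "B = l *\<^sub>R mat 1 - A"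
  have Bx: "B *v x = l *\<^sub>R x - A *v x" for x
    by (simp add: B_def algebra_simps scaleR_matrix_vector_assoc[symmetric])
  have "B *v x0 = 0"
  proof (rule psd_quadratic_form_eq_0_imp_kernel)
    show "transpose B = B" using sym by (simp add: B_def symmetric_matrix_iff mat_def)
    show "0 \<le> y \<bullet> (B *v y)" for y
      using bound[of y] by (simp add: Bx inner_diff_right f_def)
    have "x0 \<bullet> x0 = 1" using x0 by (simp add: norm_eq_1)
    then show "x0 \<bullet> (B *v x0) = 0" by (simp add: Bx inner_diff_right f_def l_def)
  qed
  then have "A *v x0 = l *\<^sub>R x0" by (simp add: Bx)
  moreover have "x0 \<noteq> 0" using x0 by auto
  ultimately have "is_eigenvalue A l" unfolding is_eigenvalue_def by blast
  with bound show thesis unfolding f_def using that by blast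
qed

lemma rayleigh_le_largest_eigenvalue:
  fixes A :: "real^'n^'n"
  assumes "transpose A = A"
  shows "x \<bullet> (A *v x) \<le> largest_eigenvalue A * (x \<bullet> x)"
proof -
  obtain l where l: "is_eigenvalue A l" and bound: "\<And>x. x \<bullet> (A *v x) \<le> l * (x \<bullet> x)"
    using symmetric_matrix_max_eigenvalue[OF assms] by blast
  have "l \<le> largest_eigenvalue A"
    unfolding largest_eigenvalue_def using l finite_eigenvalues_symmetric[OF assms] by simp
  then have "l * (x \<bullet> x) \<le> largest_eigenvalue A * (x \<bullet> x)" by (simp add: mult_right_mono)
  with bound show ?thesis by (rule order_trans)
qed

lemma is_eigenvalue_uminus: "is_eigenvalue (- A) l \<longleftrightarrow> is_eigenvalue A (- l)"
  for A :: "real^'n^'n"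
proof -
  have "(- A) *v v = - (A *v v)" for v by (simp add: vec_eq_iff matrix_vector_mult_def sum_negf)
  then show ?thesis unfolding is_eigenvalue_def by (metis minus_equation_iff scaleR_minus_left)
qed

lemma least_eigenvalue_le_rayleigh:
  fixes A :: "real^'n^'n"
  assumes "transpose A = A"
  shows "least_eigenvalue A * (x \<bullet> x) \<le> x \<bullet> (A *v x)"
proof -
  have "transpose (- A) = - A" using assms by (simp add: symmetric_matrix_iff)
  then obtain l where l: "is_eigenvalue (- A) l" and bound: "x \<bullet> ((- A) *v x) \<le> l * (x \<bullet> x)"
    using symmetric_matrix_max_eigenvalue by metis
  have "least_eigenvalue A \<le> - l"
    unfolding least_eigenvalue_def using l finite_eigenvalues_symmetric[OF assms]
    by (simp add: is_eigenvalue_uminus)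
  then have "least_eigenvalue A * (x \<bullet> x) \<le> - l * (x \<bullet> x)" by (intro mult_right_mono) simp_all
  also have "\<dots> \<le> x \<bullet> (A *v x)"
    using bound by (simp add: vec_eq_iff matrix_vector_mult_def sum_negf inner_vec_def)
  finally show ?thesis .
qed

lemma quotient_eigenvector_2x2:
  fixes p q r k m \<mu> :: real
  assumes "k * m * \<mu>\<^sup>2 - (p * m + r * k) * \<mu> + (p * r - q\<^sup>2) = 0"
  obtains \<alpha> \<beta> where "\<alpha> \<noteq> 0 \<or> \<beta> \<noteq> 0"
    and "\<alpha>\<^sup>2 * p + 2 * \<alpha> * \<beta> * q + \<beta>\<^sup>2 * r = \<mu> * (\<alpha>\<^sup>2 * k + \<beta>\<^sup>2 * m)"
proof -
  have det: "(p - \<mu> * k) * (r - \<mu> * m) = q\<^sup>2"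
    using assms by (simp add: algebra_simps power2_eq_square)
  have form: "\<alpha>\<^sup>2 * p + 2 * \<alpha> * \<beta> * q + \<beta>\<^sup>2 * r - \<mu> * (\<alpha>\<^sup>2 * k + \<beta>\<^sup>2 * m)
      = \<alpha>\<^sup>2 * (p - \<mu> * k) + 2 * \<alpha> * \<beta> * q + \<beta>\<^sup>2 * (r - \<mu> * m)" for \<alpha> \<beta>
    by (simp add: algebra_simps)
  consider "q \<noteq> 0" | "p - \<mu> * k = 0" | "r - \<mu> * m = 0"
    using det by fastforce
  then show thesis
  proof cases
    case 1
    have "q\<^sup>2 * (p - \<mu> * k) + 2 * q * (\<mu> * k - p) * q + (\<mu> * k - p)\<^sup>2 * (r - \<mu> * m)
        = (p - \<mu> * k) * ((p - \<mu> * k) * (r - \<mu> * m) - q\<^sup>2)"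
      by (simp add: power2_eq_square algebra_simps)
    then have "q\<^sup>2 * (p - \<mu> * k) + 2 * q * (\<mu> * k - p) * q + (\<mu> * k - p)\<^sup>2 * (r - \<mu> * m) = 0"
      by (simp add: det)
    then show thesis using 1 form[of q "\<mu> * k - p"] by (intro that[of q "\<mu> * k - p"]) auto
  next
    case 2
    then show thesis using det form[of 1 0] by (intro that[of 1 0]) auto
  next
    case 3
    then show thesis using det form[of 0 1] by (intro that[of 0 1]) auto
  qed
qed

lemma discrim_quotient_nonneg:
  fixes p q r k m :: real
  assumes "0 \<le> k * m"
  shows "0 \<le> discrim (k * m) (- (p * m + r * k)) (p * r - q\<^sup>2)"
proof -
  have "discrim (k * m) (- (p * m + r * k)) (p * r - q\<^sup>2) = (p * m - r * k)\<^sup>2 + 4 * (k * m) * q\<^sup>2"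
    by (simp add: discrim_def power2_eq_square algebra_simps)
  then show ?thesis using assms by simp
qed

definition block_sum :: "real^'n^'n \<Rightarrow> 'n set \<Rightarrow> 'n set \<Rightarrow> real" where
  "block_sum A X Y = (\<Sum>i\<in>X. \<Sum>j\<in>Y. A $ i $ j)"

definition indicator_vec :: "'n set \<Rightarrow> real^'n" where
  "indicator_vec X = (\<chi> i. of_bool (i \<in> X))"

lemma inner_indicator_vec_mult: "indicator_vec X \<bullet> (A *v indicator_vec Y) = block_sum A X Y"
  by (simp add: indicator_vec_def block_sum_def inner_vec_def matrix_vector_mult_def Int_def)

lemma inner_indicator_vec: "indicator_vec X \<bullet> indicator_vec Y = real (card (X \<inter> Y))"
  by (simp add: indicator_vec_def inner_vec_def Int_def)

lemma block_sum_swap: "transpose A = A \<Longrightarrow> block_sum A X Y = block_sum A Y X"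
  unfolding block_sum_def symmetric_matrix_iff by (subst sum.swap) simp

lemma sum_UNIV_Compl_split: "sum f (UNIV :: 'n::finite set) = sum f K + sum f (- K)"
  using sum.union_disjoint[of K "- K" f] by (simp add: Compl_partition)

lemma block_sum_split_left: "block_sum A UNIV Y = block_sum A K Y + block_sum A (- K) Y"
  unfolding block_sum_def by (rule sum_UNIV_Compl_split)

lemma block_sum_split_right: "block_sum A X UNIV = block_sum A X K + block_sum A X (- K)"
  unfolding block_sum_def by (simp add: sum_UNIV_Compl_split[of _ K] sum.distrib)

lemma quotient_root_between_eigenvalues:
  fixes A :: "real^'n^'n" and K :: "'n set"
  defines "k \<equiv> real (card K)" and "m \<equiv> real (card (- K))"
    and "p \<equiv> block_sum A K K" and "q \<equiv> block_sum A K (- K)" and "r \<equiv> block_sum A (- K) (- K)"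
  assumes sym: "transpose A = A" and "K \<noteq> {}" and "K \<noteq> UNIV"
    and root: "k * m * \<mu>\<^sup>2 - (p * m + r * k) * \<mu> + (p * r - q\<^sup>2) = 0"
  shows "least_eigenvalue A \<le> \<mu> \<and> \<mu> \<le> largest_eigenvalue A"
proof -
  obtain \<alpha> \<beta> where nonzero: "\<alpha> \<noteq> 0 \<or> \<beta> \<noteq> 0"
    and quotient: "\<alpha>\<^sup>2 * p + 2 * \<alpha> * \<beta> * q + \<beta>\<^sup>2 * r = \<mu> * (\<alpha>\<^sup>2 * k + \<beta>\<^sup>2 * m)"
    using quotient_eigenvector_2x2[OF root] by blast
  define x where "x = \<alpha> *\<^sub>R indicator_vec K + \<beta> *\<^sub>R indicator_vec (- K)"
  have "x \<bullet> (A *v x) = \<alpha>\<^sup>2 * p + 2 * \<alpha> * \<beta> * q + \<beta>\<^sup>2 * r"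
    using block_sum_swap[OF sym, of "- K" K]
    by (simp add: x_def p_def q_def r_def algebra_simps inner_indicator_vec_mult power2_eq_square)
  moreover have norm2: "x \<bullet> x = \<alpha>\<^sup>2 * k + \<beta>\<^sup>2 * m"
    by (simp add: x_def k_def m_def inner_indicator_vec algebra_simps power2_eq_square)
  ultimately have form: "x \<bullet> (A *v x) = \<mu> * (x \<bullet> x)"
    by (simp add: quotient)
  have "k > 0" "m > 0"
    using \<open>K \<noteq> {}\<close> \<open>K \<noteq> UNIV\<close> by (auto simp: k_def m_def card_gt_0_iff)
  then have "x \<bullet> x > 0"
    unfolding norm2 using nonzero by (auto intro: add_pos_nonneg add_nonneg_pos)
  with form show ?thesis
    using rayleigh_le_largest_eigenvalue[OF sym, of x] least_eigenvalue_le_rayleigh[OF sym, of x]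
    by simp
qed

lemma is_walk_rev:
  assumes "simple_graph E" and "is_walk E p"
  shows "is_walk E (rev p)"
  unfolding is_walk_def
proof (intro conjI allI impI)
  show "rev p \<noteq> []" using assms(2) by (simp add: is_walk_def)
next
  fix i assume i: "Suc i < length (rev p)"
  define j where "j = length p - Suc (Suc i)"
  have "E (p ! j) (p ! Suc j)" using assms(2) i by (simp add: is_walk_def j_def)
  then have "E (p ! Suc j) (p ! j)" using assms(1) by (simp add: simple_graph_def)
  moreover have "rev p ! i = p ! Suc j" "rev p ! Suc i = p ! j"
    using i by (simp_all add: rev_nth j_def Suc_diff_Suc)
  ultimately show "E (rev p ! i) (rev p ! Suc i)" by simp
qed

lemma gdist_commute:
  assumes "simple_graph E"
  shows "gdist E u v = gdist E v u"
proof -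
  have reverse: "is_walk E (rev p) \<and> hd (rev p) = last p \<and> last (rev p) = hd p
      \<and> length (rev p) = length p" if "is_walk E p" for p
  proof -
    have "p \<noteq> []" using that by (simp add: is_walk_def)
    then show ?thesis using is_walk_rev[OF assms that] by (simp add: hd_rev last_rev)
  qed
  have "(\<exists>p. is_walk E p \<and> hd p = u \<and> last p = v \<and> length p = Suc k) \<longleftrightarrow>
        (\<exists>p. is_walk E p \<and> hd p = v \<and> last p = u \<and> length p = Suc k)" for k
    using reverse by metis
  then show ?thesis unfolding gdist_def by presburger
qed

lemma gdist_self [simp]: "gdist E u u = 0"
  unfolding gdist_def by (rule Least_eq_0) (rule exI[of _ "[u]"], simp add: is_walk_def)

lemma gdist_edge:
  assumes "E u v" and "u \<noteq> v"
  shows "gdist E u v = 1"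
  unfolding gdist_def
proof (rule Least_equality)
  show "\<exists>p. is_walk E p \<and> hd p = u \<and> last p = v \<and> length p = Suc 1"
    using assms by (intro exI[of _ "[u, v]"]) (auto simp: is_walk_def nth_Cons split: nat.splits)
next
  fix k assume "\<exists>p. is_walk E p \<and> hd p = u \<and> last p = v \<and> length p = Suc k"
  then obtain p where p: "hd p = u" "last p = v" "length p = Suc k" by blast
  show "1 \<le> k"
  proof (rule ccontr)
    assume "\<not> 1 \<le> k"
    with p have "length p = 1" by simp
    then obtain a where "p = [a]" by (cases p) auto
    with p assms(2) show False by simp
  qed
qed

lemma dist_signless_laplacian_entry:
  "dist_signless_laplacian E $ i $ j = (if i = j then transmission E i else 0) + real (gdist E i j)"
  by (simp add: dist_signless_laplacian_def transmission_matrix_def dist_matrix_def)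

lemma symmetric_dist_signless_laplacian:
  "simple_graph E \<Longrightarrow> transpose (dist_signless_laplacian E) = dist_signless_laplacian E"
  unfolding symmetric_matrix_iff dist_signless_laplacian_entry by (auto simp: gdist_commute)

lemma sum_gdist_eq_transmission: "(\<Sum>j\<in>UNIV. real (gdist E i j)) = transmission E i"
  using sum.remove[of UNIV i "\<lambda>j. real (gdist E i j)"] by (simp add: transmission_def)

lemma block_sum_dist_signless_laplacian_UNIV:
  "block_sum (dist_signless_laplacian E) X UNIV = 2 * (\<Sum>i\<in>X. transmission E i)"
  by (simp add: block_sum_def dist_signless_laplacian_entry sum.distrib sum_gdist_eq_transmission
      sum_distrib_left)

lemma wiener_eq_sum_transmission: "wiener E = (\<Sum>i\<in>UNIV. transmission E i) / 2"
  by (simp add: wiener_def transmission_def)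

lemma block_sum_dist_signless_laplacian_clique:
  assumes "is_clique E K"
  shows "block_sum (dist_signless_laplacian E) K K
           = clique_trans_sum E K + real (card K) * (real (card K) - 1)"
proof -
  have row: "(\<Sum>j\<in>K. dist_signless_laplacian E $ i $ j) = transmission E i + (real (card K) - 1)"
    if "i \<in> K" for i
  proof -
    have "(\<Sum>j\<in>K - {i}. real (gdist E i j)) = (\<Sum>j\<in>K - {i}. 1)"
      using that assms by (intro sum.cong) (auto simp: is_clique_def gdist_edge)
    moreover have "card K \<ge> 1" using that by (auto simp: Suc_le_eq card_gt_0_iff)
    ultimately have "(\<Sum>j\<in>K. real (gdist E i j)) = real (card K) - 1"
      using that sum.remove[of K i "\<lambda>j. real (gdist E i j)"] by simp
    then show ?thesis
      using that by (simp add: dist_signless_laplacian_entry sum.distrib)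
  qed
  show ?thesis
    by (simp add: block_sum_def row clique_trans_sum_def sum.distrib)
qed

lemma coef_a_coef_b_block_sums:
  fixes E :: "'a::finite \<Rightarrow> 'a \<Rightarrow> bool" and K :: "'a set"
  defines "Q \<equiv> dist_signless_laplacian E"
  defines "k \<equiv> real (clique_number E)" and "m \<equiv> real (CARD('a) - clique_number E)"
    and "p \<equiv> block_sum Q K K" and "q \<equiv> block_sum Q K (- K)" and "r \<equiv> block_sum Q (- K) (- K)"
  assumes "simple_graph E" and "is_clique E K" and "card K = clique_number E"
  shows "coef_a E K = - (p * m + r * k)" and "coef_b E K = p * r - q\<^sup>2"
proof -
  define s where "s = clique_trans_sum E K"
  define W where "W = wiener E"
  define c where "c = k * (k - 1)"
  have p: "p = s + c"
    using block_sum_dist_signless_laplacian_clique[OF assms(8)] assms(9)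
    by (simp add: p_def Q_def s_def c_def k_def)
  have KU: "block_sum Q K UNIV = 2 * s"
    by (simp add: Q_def block_sum_dist_signless_laplacian_UNIV s_def clique_trans_sum_def)
  have UU: "block_sum Q UNIV UNIV = 4 * W"
    by (simp add: Q_def block_sum_dist_signless_laplacian_UNIV W_def wiener_eq_sum_transmission)
  have q: "q = s - c"
    using block_sum_split_right[of Q K K] KU p by (simp add: p_def q_def)
  have r: "r = 4 * W - 3 * s + c"
    using block_sum_split_left[where A = Q and K = K and Y = UNIV]
      block_sum_split_right[of Q "- K" K] KU UU q
      block_sum_swap[OF symmetric_dist_signless_laplacian[OF assms(7)], of "- K" K]
    by (simp add: Q_def q_def r_def)
  have "clique_number E \<le> CARD('a)"
    using assms(9) by (metis card_mono finite subset_UNIV)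
  then have n: "real CARD('a) = k + m" by (simp add: k_def m_def)
  show "coef_a E K = - (p * m + r * k)"
    by (simp add: coef_a_def Let_def n p r c_def flip: k_def s_def W_def) (simp add: algebra_simps)
  show "coef_b E K = p * r - q\<^sup>2"
    by (simp add: coef_b_def Let_def p q r c_def flip: k_def s_def W_def)
      (simp add: algebra_simps power2_eq_square)
qed

lemma max_clique_quotient_root_between_eigenvalues:
  fixes E :: "'a::finite \<Rightarrow> 'a \<Rightarrow> bool"
  assumes "simple_graph E" and "is_clique E K" and "card K = clique_number E"
    and "0 < clique_number E" and "clique_number E < CARD('a)"
    and "real (CARD('a) - clique_number E) * real (clique_number E) * \<mu>\<^sup>2
           + coef_a E K * \<mu> + coef_b E K = 0"
  shows "least_eigenvalue (dist_signless_laplacian E) \<le> \<mu> \<and>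
         \<mu> \<le> largest_eigenvalue (dist_signless_laplacian E)"
proof -
  have sym: "transpose (dist_signless_laplacian E) = dist_signless_laplacian E"
    using assms(1) by (rule symmetric_dist_signless_laplacian)
  have "K \<noteq> {}" "K \<noteq> UNIV" using assms(3-5) by auto
  moreover have "card (- K) = CARD('a) - clique_number E"
    using assms(3) by (simp add: Compl_eq_Diff_UNIV card_Diff_subset)
  ultimately show ?thesis
    using assms(6)[unfolded coef_a_coef_b_block_sums[OF assms(1-3)]]
    by (intro quotient_root_between_eigenvalues[OF sym, where K = K])
      (simp_all add: assms(3) algebra_simps)
qed

lemma discrim_max_clique_nonneg:
  fixes E :: "'a::finite \<Rightarrow> 'a \<Rightarrow> bool"
  assumes "simple_graph E" and "is_clique E K" and "card K = clique_number E"
  shows "0 \<le> discrim (real (CARD('a) - clique_number E) * real (clique_number E))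
                     (coef_a E K) (coef_b E K)"
proof -
  have "0 \<le> discrim (real (clique_number E) * real (CARD('a) - clique_number E))
                     (coef_a E K) (coef_b E K)"
    using discrim_quotient_nonneg[of "real (clique_number E)" "real (CARD('a) - clique_number E)"]
      coef_a_coef_b_block_sums[OF assms] by simp
  then show ?thesis by (simp add: mult.commute)
qed

lemma ex_max_clique: "\<exists>K. is_clique E K \<and> card K = clique_number E"
  for E :: "'a::finite \<Rightarrow> 'a \<Rightarrow> bool"
proof -
  have "is_clique E {}" by (simp add: is_clique_def)
  then have "clique_number E \<in> card ` {K. is_clique E K}"
    unfolding clique_number_def by (intro Max_in) auto
  then show ?thesis by auto
qed

lemma max_clique_roots_between_eigenvalues:
  fixes E :: "'a::finite \<Rightarrow> 'a \<Rightarrow> bool" and K :: "'a set"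
  defines "a \<equiv> coef_a E K" and "b \<equiv> coef_b E K"
    and "N \<equiv> real (CARD('a) - clique_number E)" and "w \<equiv> real (clique_number E)"
  assumes "simple_graph E" and "is_clique E K" and "card K = clique_number E"
    and "0 < clique_number E" and "clique_number E < CARD('a)"
  shows "(- a + sqrt (a\<^sup>2 - 4 * b * N * w)) / (2 * N * w)
           \<le> largest_eigenvalue (dist_signless_laplacian E)"
    and "least_eigenvalue (dist_signless_laplacian E)
           \<le> (- a - sqrt (a\<^sup>2 - 4 * b * N * w)) / (2 * N * w)"
proof -
  have "N * w \<noteq> 0" using assms(8,9) by (simp add: N_def w_def)
  moreover have "0 \<le> discrim (N * w) a b"
    using discrim_max_clique_nonneg[OF assms(5-7)] by (simp add: a_def b_def N_def w_def)
  moreover have "a\<^sup>2 - 4 * b * N * w = discrim (N * w) a b" by (simp add: discrim_def)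
  ultimately have root: "N * w * \<mu>\<^sup>2 + a * \<mu> + b = 0"
    if "\<mu> = (- a + sqrt (a\<^sup>2 - 4 * b * N * w)) / (2 * N * w) \<or>
        \<mu> = (- a - sqrt (a\<^sup>2 - 4 * b * N * w)) / (2 * N * w)" for \<mu>
    using that discriminant_nonneg[of "N * w"] by (simp add: mult.assoc)
  then have "least_eigenvalue (dist_signless_laplacian E) \<le> \<mu> \<and>
             \<mu> \<le> largest_eigenvalue (dist_signless_laplacian E)"
    if "\<mu> = (- a + sqrt (a\<^sup>2 - 4 * b * N * w)) / (2 * N * w) \<or>
        \<mu> = (- a - sqrt (a\<^sup>2 - 4 * b * N * w)) / (2 * N * w)" for \<mu>
    using max_clique_quotient_root_between_eigenvalues[OF assms(5-9)] that
    unfolding a_def b_def N_def w_def by blast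
  then show "(- a + sqrt (a\<^sup>2 - 4 * b * N * w)) / (2 * N * w)
               \<le> largest_eigenvalue (dist_signless_laplacian E)"
    and "least_eigenvalue (dist_signless_laplacian E)
               \<le> (- a - sqrt (a\<^sup>2 - 4 * b * N * w)) / (2 * N * w)"
    by blast+
qed

theorem corollary4p7:
  fixes E :: "'a::finite \<Rightarrow> 'a \<Rightarrow> bool"
  assumes "simple_graph E" and "graph_connected E"
      and "2 \<le> clique_number E" and "clique_number E \<le> CARD('a) - 1"
  shows "(largest_eigenvalue (dist_signless_laplacian E) \<ge>
           Max ((\<lambda>K. (- coef_a E K + sqrt ((coef_a E K)\<^sup>2
                          - 4 * coef_b E K * real (CARD('a) - clique_number E) * real (clique_number E)))
                      / (2 * real (CARD('a) - clique_number E) * real (clique_number E)))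
                ` {K. is_clique E K \<and> card K = clique_number E})) \<and>
         (least_eigenvalue (dist_signless_laplacian E) \<le>
           Min ((\<lambda>K. (- coef_a E K - sqrt ((coef_a E K)\<^sup>2
                          - 4 * coef_b E K * real (CARD('a) - clique_number E) * real (clique_number E)))
                      / (2 * real (CARD('a) - clique_number E) * real (clique_number E)))
                ` {K. is_clique E K \<and> card K = clique_number E}))"
proof -
  have "0 < clique_number E" and "clique_number E < CARD('a)" using assms(3,4) by linarith+
  moreover have "{K. is_clique E K \<and> card K = clique_number E} \<noteq> {}"
    using ex_max_clique[of E] by blast
  ultimately show ?thesis
    using max_clique_roots_between_eigenvalues[OF assms(1)] by simp
qed

end
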